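(* Let $G=(g_1,\dots,g_k)\in\mathbb{N}_0^k$ with $g_1>0$ and $c(G)=(c_2,\dots,c_k)$, and let $z_1=\gcd(G)$. Then $G$ is telescopic if and only if for each $i=2,\dots,k$ there exists $z_i\in\langle z_1\rangle$ (i.e. a non-negative multiple of $z_1$) such that $g_i=z_iC_{i,k}$, $\gcd(z_i/z_1,c_i)=1$, and $z_i\in\langle z_jC_{j,i-1}:1\le j<i\rangle$.
   Context: $\langle A\rangle$ is the set of $\mathbb{N}_0$-linear combinations of the elements of $A$. $G_i=(g_1,\dots,g_i)$, $d_i=\gcd(G_i)$, $c_j=d_{j-1}/d_j$ for $2\le j\le k$; $G$ is telescopic if $c_jg_j\in\langle G_{j-1}\rangle$ for all $2\le j\le k$. $C_{m,n}=\prod_{j=m+1}^n c_j$, with the empty product (when $n\le m$) equal to $1$. *)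

theory Defs
  imports Main
begin

text \<open>A sequence G = (g_1,...,g_k) is represented by g :: nat => nat, using indices 1..k.\<close>

definition in_monoid :: "(nat \<Rightarrow> nat) \<Rightarrow> nat set \<Rightarrow> nat \<Rightarrow> bool" where
  "in_monoid gen J x \<longleftrightarrow> (\<exists>l :: nat \<Rightarrow> nat. x = (\<Sum>j\<in>J. l j * gen j))"

definition dseq :: "(nat \<Rightarrow> nat) \<Rightarrow> nat \<Rightarrow> nat" where
  "dseq g i = Gcd (g ` {1..i})"

definition cseq :: "(nat \<Rightarrow> nat) \<Rightarrow> nat \<Rightarrow> nat" where
  "cseq g j = dseq g (j - 1) div dseq g j"

definition Cprod :: "(nat \<Rightarrow> nat) \<Rightarrow> nat \<Rightarrow> nat \<Rightarrow> nat" where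
  "Cprod g m n = (\<Prod>j\<in>{m+1..n}. cseq g j)"

definition telescopic :: "(nat \<Rightarrow> nat) \<Rightarrow> nat \<Rightarrow> bool" where
  "telescopic g k \<longleftrightarrow> (\<forall>j\<in>{2..k}. in_monoid g {1..j-1} (cseq g j * g j))"

end

theory Submission
  imports Defs
begin

text \<open>Write \<open>d\<^sub>i = dseq g i\<close>. Since \<open>C\<^sub>i\<^sub>,\<^sub>k d\<^sub>k = d\<^sub>i\<close>, the condition \<open>g\<^sub>i = z\<^sub>i C\<^sub>i\<^sub>,\<^sub>k\<close> says exactly
  \<open>z\<^sub>i = g\<^sub>i d\<^sub>k / d\<^sub>i\<close>, so the \<open>z\<^sub>i\<close> are forced. Multiplying the telescopic relation
  \<open>c\<^sub>i g\<^sub>i \<in> \<langle>g\<^sub>1,\<dots>,g\<^sub>i\<^sub>-\<^sub>1\<rangle>\<close> by \<open>d\<^sub>k / d\<^sub>i\<^sub>-\<^sub>1\<close> turns \<open>c\<^sub>i g\<^sub>i\<close> into \<open>z\<^sub>i\<close> and each \<open>g\<^sub>j\<close> into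
  \<open>z\<^sub>j C\<^sub>j\<^sub>,\<^sub>i\<^sub>-\<^sub>1\<close>; such a common rescaling preserves membership in a monoid. The
  coprimality of \<open>z\<^sub>i / z\<^sub>1 = g\<^sub>i / d\<^sub>i\<close> and \<open>c\<^sub>i = d\<^sub>i\<^sub>-\<^sub>1 / d\<^sub>i\<close> holds because
  \<open>d\<^sub>i = gcd g\<^sub>i d\<^sub>i\<^sub>-\<^sub>1\<close>.\<close>

lemma dseq_1: "dseq g 1 = g 1"
  by (simp add: dseq_def)

lemma dseq_Suc: "dseq g (Suc i) = gcd (g (Suc i)) (dseq g i)"
proof -
  have "{1..Suc i} = insert (Suc i) {1..i}" by auto
  thus ?thesis by (simp add: dseq_def Gcd_insert)
qed

lemma dseq_pos: assumes "g 1 > 0" "i \<ge> 1" shows "dseq g i > 0"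
proof -
  have "g 1 \<in> g ` {1..i}" using assms by auto
  then have "\<not> g ` {1..i} \<subseteq> {0}" using assms(1) by fastforce
  then show ?thesis unfolding dseq_def using Gcd_0_iff gr0I by metis
qed

lemma dseq_dvd: "j \<in> {1..i} \<Longrightarrow> dseq g i dvd g j"
  unfolding dseq_def by (simp add: Gcd_dvd)

lemma cseq_mult_dseq: assumes "i \<ge> 2" shows "cseq g i * dseq g i = dseq g (i - 1)"
proof -
  obtain m where m: "i = Suc m" using assms by (cases i) auto
  have "dseq g i dvd dseq g m" unfolding m dseq_Suc by simp
  thus ?thesis unfolding cseq_def m by simp
qed

lemma Cprod_mult_dseq: assumes "1 \<le> m" "m \<le> n" shows "Cprod g m n * dseq g n = dseq g m"
  using assms(2)
proof (induction n rule: dec_induct)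
  case base
  then show ?case by (simp add: Cprod_def)
next
  case (step n)
  have "Cprod g m (Suc n) = Cprod g m n * cseq g (Suc n)"
    unfolding Cprod_def using step by (simp add: prod.nat_ivl_Suc')
  moreover have "cseq g (Suc n) * dseq g (Suc n) = dseq g n"
    using cseq_mult_dseq[of "Suc n" g] step assms by simp
  ultimately show ?case using step by (metis mult.assoc)
qed

lemma coprime_div_dseq_cseq:
  assumes "g 1 > 0" "i \<ge> 2" shows "coprime (g i div dseq g i) (cseq g i)"
proof -
  obtain m where m: "i = Suc m" and "m \<ge> 1" using assms by (cases i) auto
  then have "dseq g m \<noteq> 0" using dseq_pos assms by auto
  then show ?thesis
    unfolding m cseq_def dseq_Suc diff_Suc_1 by (intro div_gcd_coprime) simp
qed

lemma eq_mult_Cprod_iff: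
  assumes "g 1 > 0" "1 \<le> i" "i \<le> k"
  shows "g i = z * Cprod g i k \<longleftrightarrow> z * dseq g i = g i * dseq g k"
proof -
  have "dseq g k > 0" using dseq_pos assms by auto
  moreover have "z * dseq g i = z * Cprod g i k * dseq g k"
    using Cprod_mult_dseq[OF assms(2,3)] by (simp add: mult.assoc)
  ultimately show ?thesis by auto
qed

lemma mult_Cprod_iff_rescaled:
  assumes "g 1 > 0" and "z 1 = dseq g k"
  shows "(\<forall>i\<in>{2..k}. g i = z i * Cprod g i k) \<longleftrightarrow>
    (\<forall>j\<in>{1..k}. z j * dseq g j = g j * dseq g k)"
proof -
  have "j \<in> {1..k} \<Longrightarrow> j \<notin> {2..k} \<Longrightarrow> z j * dseq g j = g j * dseq g k" for j
    using assms(2) dseq_1[of g] by (simp add: not_less_eq_eq)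
  moreover have "i \<in> {2..k} \<Longrightarrow> g i = z i * Cprod g i k \<longleftrightarrow> z i * dseq g i = g i * dseq g k" for i
    using eq_mult_Cprod_iff[of g, OF assms(1)] by simp
  ultimately show ?thesis by force
qed

lemma in_monoid_rescale:
  assumes a: "a > 0" and b: "b > 0" and x: "x * a = y * b"
    and gen: "\<And>j. j \<in> J \<Longrightarrow> gen j * a = gen' j * b"
  shows "in_monoid gen J x \<longleftrightarrow> in_monoid gen' J y"
proof -
  have rescale: "(\<Sum>j\<in>J. l j * gen j) * a = (\<Sum>j\<in>J. l j * gen' j) * b" for l
    by (simp add: sum_distrib_right mult.assoc gen cong: sum.cong)
  have "x = (\<Sum>j\<in>J. l j * gen j) \<longleftrightarrow> y = (\<Sum>j\<in>J. l j * gen' j)" for l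
  proof -
    have "x = (\<Sum>j\<in>J. l j * gen j) \<longleftrightarrow> x * a = (\<Sum>j\<in>J. l j * gen j) * a"
      using a by simp
    also have "\<dots> \<longleftrightarrow> y * b = (\<Sum>j\<in>J. l j * gen' j) * b"
      by (simp only: x rescale)
    also have "\<dots> \<longleftrightarrow> y = (\<Sum>j\<in>J. l j * gen' j)"
      using b by simp
    finally show ?thesis .
  qed
  then show ?thesis unfolding in_monoid_def by simp
qed

lemma telescopic_iff_rescaled:
  assumes "k \<ge> 1" and g1: "g 1 > 0"
    and z: "\<forall>j\<in>{1..k}. z j * dseq g j = g j * dseq g k"
  shows "telescopic g k \<longleftrightarrow>
    (\<forall>i\<in>{2..k}. in_monoid (\<lambda>j. z j * Cprod g j (i - 1)) {1..i-1} (z i))"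
  unfolding telescopic_def
proof (intro ball_cong refl)
  fix i assume i: "i \<in> {2..k}"
  show "in_monoid g {1..i-1} (cseq g i * g i) \<longleftrightarrow>
        in_monoid (\<lambda>j. z j * Cprod g j (i - 1)) {1..i-1} (z i)"
  proof (rule in_monoid_rescale)
    show "dseq g k > 0" "dseq g (i - 1) > 0" using dseq_pos g1 i by auto
    have "cseq g i * g i * dseq g k = cseq g i * (z i * dseq g i)"
      using z i by simp
    also have "\<dots> = z i * dseq g (i - 1)"
      using cseq_mult_dseq[of i g] i by (simp add: ac_simps)
    finally show "cseq g i * g i * dseq g k = z i * dseq g (i - 1)" .
    fix j assume j: "j \<in> {1..i-1}"
    have "j \<in> {1..k}" using i j by auto
    then have "g j * dseq g k = z j * dseq g j" using z by simp
    also have "\<dots> = z j * Cprod g j (i - 1) * dseq g (i - 1)"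
      using Cprod_mult_dseq[of j "i - 1" g] j by (simp add: mult.assoc)
    finally show "g j * dseq g k = z j * Cprod g j (i - 1) * dseq g (i - 1)" .
  qed
qed

theorem mainTheorem9:
  fixes g :: "nat \<Rightarrow> nat" and k :: nat
  assumes "k \<ge> 1" and "g 1 > 0"
  shows "telescopic g k \<longleftrightarrow>
    (\<exists>z :: nat \<Rightarrow> nat. z 1 = dseq g k \<and>
       (\<forall>i\<in>{2..k}.
          (\<exists>n. z i = n * z 1) \<and>
          g i = z i * Cprod g i k \<and>
          gcd (z i div z 1) (cseq g i) = 1 \<and>
          in_monoid (\<lambda>j. z j * Cprod g j (i - 1)) {1..i-1} (z i)))"
    (is "_ \<longleftrightarrow> (\<exists>z. ?P z)")
proof
  assume tele: "telescopic g k"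
  define z where "z i = g i div dseq g i * dseq g k" for i
  have z1: "z 1 = dseq g k" unfolding z_def dseq_1 using assms by simp
  have scaled: "\<forall>j\<in>{1..k}. z j * dseq g j = g j * dseq g k"
    using dseq_dvd[of _ _ g] by (simp add: z_def)
  have "?P z"
  proof (intro conjI ballI)
    fix i assume i: "i \<in> {2..k}"
    have zi: "z i = g i div dseq g i * z 1" unfolding z1 by (rule z_def)
    then show "\<exists>n. z i = n * z 1" by blast
    show "g i = z i * Cprod g i k"
      using i scaled mult_Cprod_iff_rescaled[of g z k, OF assms(2) z1] by blast
    have "z i div z 1 = g i div dseq g i" unfolding zi z1 using dseq_pos assms by simp
    then show "gcd (z i div z 1) (cseq g i) = 1"
      using coprime_div_dseq_cseq[of g i] assms i by simp
    show "in_monoid (\<lambda>j. z j * Cprod g j (i - 1)) {1..i-1} (z i)"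
      using tele i telescopic_iff_rescaled[of k g, OF assms scaled] by blast
  qed (fact z1)
  then show "\<exists>z. ?P z" by (rule exI[of _ z])
next
  assume "\<exists>z. ?P z"
  then obtain z where z1: "z 1 = dseq g k" and P: "?P z" by blast
  then have "\<forall>j\<in>{1..k}. z j * dseq g j = g j * dseq g k"
    using mult_Cprod_iff_rescaled[of g z k, OF assms(2) z1] by blast
  then show "telescopic g k" using P telescopic_iff_rescaled[of k g, OF assms] by blast
qed

end
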